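(* In type $A_r$, let $\theta$ be the highest root and, for $1 \le m \le r$, let $C_m = s_m s_{m+1} \cdots s_r\, s_{m-1} s_{m-2} \cdots s_1$ (so $C_1 = s_1 s_2\cdots s_r$ and $C_r = s_r s_{r-1}\cdots s_1$). Then $C_m(\theta) = -\alpha_m$ for each $m$, and for any Coxeter element $c$ of $W(A_r)$ (a product of all simple reflections, each exactly once, in some order), $c(\theta) > 0$ if and only if $c \notin \{C_1, \dots, C_r\}$.
   Context: Type $A_r$ is realized in $\mathbb{R}^{r+1}$ with orthonormal basis $e_1,\dots,e_{r+1}$, positive roots $e_i - e_j$ ($i<j$), simple roots $\alpha_i = e_i - e_{i+1}$, and $s_i$ swapping $e_i$ and $e_{i+1}$; the highest root is $\theta = e_1 - e_{r+1}$. Products of reflections act by composition (rightmost factor applied first). $\gamma>0$ means $\gamma$ is a positive root. *)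

theory Defs
  imports Main Complex_Main
begin

text \<open>Type A_r realised in R^(r+1): vectors are functions nat => real, where only the
coordinates 1..r+1 are relevant (e_i is the i-th standard basis vector).\<close>

definition e :: "nat \<Rightarrow> nat \<Rightarrow> real" where
  "e i = (\<lambda>k. if k = i then 1 else 0)"

definition s :: "nat \<Rightarrow> (nat \<Rightarrow> real) \<Rightarrow> (nat \<Rightarrow> real)" where
  "s i v = (\<lambda>k. if k = i then v (i+1) else if k = i+1 then v i else v k)"

text \<open>Product of simple reflections s_{i1} s_{i2} ... s_{ik}, acting by composition
(rightmost factor applied first).\<close>
definition refl_prod :: "nat list \<Rightarrow> (nat \<Rightarrow> real) \<Rightarrow> (nat \<Rightarrow> real)" where
  "refl_prod xs = foldr (\<lambda>i f. s i \<circ> f) xs id"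

definition simple_root :: "nat \<Rightarrow> nat \<Rightarrow> real" where
  "simple_root m = e m - e (m+1)"

definition highest_root :: "nat \<Rightarrow> nat \<Rightarrow> real" where
  "highest_root r = e 1 - e (r+1)"

definition positive_roots :: "nat \<Rightarrow> (nat \<Rightarrow> real) set" where
  "positive_roots r = {e i - e j | i j. 1 \<le> i \<and> i < j \<and> j \<le> r + 1}"

definition C :: "nat \<Rightarrow> nat \<Rightarrow> (nat \<Rightarrow> real) \<Rightarrow> (nat \<Rightarrow> real)" where
  "C r m = refl_prod ([m..<r+1] @ rev [1..<m])"

definition coxeter_word :: "nat \<Rightarrow> nat list \<Rightarrow> bool" where
  "coxeter_word r xs \<longleftrightarrow> distinct xs \<and> set xs = {1..r}"

end

theory Submission
  imports Defs "HOL-Combinatorics.Permutations"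
begin

(* A word in the simple reflections sends e k to e (word_perm xs k), where word_perm xs is the
   corresponding permutation of the indices; so c(theta) = e (c 1) - e (c (r+1)) fails to be
   positive exactly when c reverses the order of 1 and r+1. In a Coxeter word of rank r+1 the
   letter r+1 commutes with every letter except r, so c = s (r+1) c' or c = c' s (r+1) for a
   Coxeter element c' of rank r. In both cases, if c reverses 1 and r+1 then so does c', hence
   c' = C r m by induction, and then c = C (r+1) (r+1) resp. c = C (r+1) m. Conversely
   C r m (theta) = - simple_root m is computed by following 1 and r+1 along the word. *)

definition word_perm :: "nat list \<Rightarrow> nat \<Rightarrow> nat" where
  "word_perm xs = foldr (\<lambda>i f. transpose i (Suc i) \<circ> f) xs id"

lemma word_perm_Nil [simp]: "word_perm [] = id"
  by (simp add: word_perm_def)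

lemma word_perm_Cons [simp]: "word_perm (i # xs) = transpose i (Suc i) \<circ> word_perm xs"
  by (simp add: word_perm_def)

lemma word_perm_append: "word_perm (xs @ ys) = word_perm xs \<circ> word_perm ys"
  by (induction xs) auto

lemma refl_prod_Nil [simp]: "refl_prod [] = id"
  by (simp add: refl_prod_def)

lemma refl_prod_Cons [simp]: "refl_prod (i # xs) = s i \<circ> refl_prod xs"
  by (simp add: refl_prod_def)

lemma refl_prod_append: "refl_prod (xs @ ys) = refl_prod xs \<circ> refl_prod ys"
  by (induction xs) auto

lemma e_eq_iff [simp]: "e a = e b \<longleftrightarrow> a = b"
  by (metis e_def zero_neq_one)

lemma s_e: "s i (e k) = e (transpose i (Suc i) k)"
  by (auto simp: s_def e_def transpose_def)

lemma refl_prod_e: "refl_prod xs (e k) = e (word_perm xs k)"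
  by (induction xs) (auto simp: s_e)

lemma word_perm_eq_if_refl_prod_eq:
  "refl_prod xs = refl_prod ys \<Longrightarrow> word_perm xs = word_perm ys"
  by (metis refl_prod_e e_eq_iff ext)

lemma refl_prod_diff: "refl_prod xs (u - v) = refl_prod xs u - refl_prod xs v"
proof (induction xs)
  case (Cons i xs)
  then show ?case by (auto simp: s_def)
qed simp

lemma refl_prod_highest_root:
  "refl_prod xs (highest_root r) = e (word_perm xs 1) - e (word_perm xs (Suc r))"
  by (simp add: highest_root_def refl_prod_diff refl_prod_e)

lemma diff_e_in_positive_roots_iff:
  assumes "a \<noteq> b"
  shows "e a - e b \<in> positive_roots r \<longleftrightarrow> 1 \<le> a \<and> a < b \<and> b \<le> Suc r"
proof
  assume "e a - e b \<in> positive_roots r"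
  then obtain i j where ij: "e a - e b = e i - e j" "1 \<le> i" "i < j" "j \<le> Suc r"
    by (auto simp: positive_roots_def)
  have "(e a - e b) a = (e i - e j) a" "(e a - e b) b = (e i - e j) b"
    using ij(1) by simp_all
  then have "a = i \<and> b = j"
    using assms ij(3) by (auto simp: e_def split: if_splits)
  with ij show "1 \<le> a \<and> a < b \<and> b \<le> Suc r" by simp
qed (auto simp: positive_roots_def)

lemma word_perm_permutes: "set xs \<subseteq> {1..n} \<Longrightarrow> word_perm xs permutes {1..Suc n}"
proof (induction xs)
  case (Cons i xs)
  then have "word_perm xs permutes {1..Suc n}" by simp
  moreover have "transpose i (Suc i) permutes {1..Suc n}"
    using Cons.prems by (intro permutes_swap_id) auto
  ultimately show ?case unfolding word_perm_Cons by (rule permutes_compose)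
qed simp

lemma word_perm_fixed: "(\<forall>i\<in>set xs. k \<noteq> i \<and> k \<noteq> Suc i) \<Longrightarrow> word_perm xs k = k"
  by (induction xs) auto

lemma word_perm_rev_upt_first: "a \<le> b \<Longrightarrow> word_perm (rev [a..<b]) a = b"
  by (induction b) (auto simp: le_Suc_eq)

lemma word_perm_upt_last: "a \<le> b \<Longrightarrow> word_perm [a..<b] b = a"
  by (induction b) (auto simp: le_Suc_eq word_perm_append)

lemma C_e_1:
  assumes "1 \<le> m" "m \<le> r"
  shows "C r m (e 1) = e (Suc m)"
proof -
  have "[m..<Suc r] = m # [Suc m..<Suc r]"
    using assms(2) by (simp add: upt_conv_Cons del: upt_Suc)
  moreover have "word_perm [Suc m..<Suc r] m = m"
    by (rule word_perm_fixed) auto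
  ultimately have "word_perm ([m..<Suc r] @ rev [1..<m]) 1 = Suc m"
    using assms(1) by (simp add: word_perm_append word_perm_rev_upt_first del: upt_Suc)
  then show ?thesis by (simp add: C_def refl_prod_e del: refl_prod_Cons)
qed

lemma C_e_last:
  assumes "m \<le> r"
  shows "C r m (e (Suc r)) = e m"
proof -
  have "word_perm (rev [1..<m]) (Suc r) = Suc r"
    using assms by (intro word_perm_fixed) auto
  with assms have "word_perm ([m..<Suc r] @ rev [1..<m]) (Suc r) = m"
    by (simp add: word_perm_append word_perm_upt_last del: upt_Suc)
  then show ?thesis by (simp add: C_def refl_prod_e del: refl_prod_Cons)
qed

lemma C_highest_root:
  assumes "1 \<le> m" "m \<le> r"
  shows "C r m (highest_root r) = - simple_root m"
proof -
  have "C r m (highest_root r) = C r m (e 1) - C r m (e (Suc r))"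
    unfolding C_def highest_root_def by (simp add: refl_prod_diff del: refl_prod_Cons upt_Suc)
  also have "\<dots> = e (Suc m) - e m"
    using assms by (simp only: C_e_1 C_e_last)
  also have "\<dots> = - simple_root m"
    by (simp add: simple_root_def fun_eq_iff)
  finally show ?thesis .
qed

lemma s_commute: "Suc a < b \<Longrightarrow> s a \<circ> s b = s b \<circ> s a"
  by (auto simp: s_def fun_eq_iff)

lemma s_comp_refl_prod_commute:
  "\<forall>a\<in>set xs. Suc a < b \<Longrightarrow> s b \<circ> refl_prod xs = refl_prod xs \<circ> s b"
proof (induction xs)
  case (Cons a xs)
  have "Suc a < b" and "\<forall>a\<in>set xs. Suc a < b"
    using Cons.prems by simp_all
  note ih = Cons.IH[OF this(2)]
  have "s b \<circ> refl_prod (a # xs) = (s b \<circ> s a) \<circ> refl_prod xs"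
    by (simp add: comp_assoc)
  also have "\<dots> = s a \<circ> (s b \<circ> refl_prod xs)"
    by (simp only: s_commute[OF \<open>Suc a < b\<close>, symmetric] comp_assoc)
  also have "\<dots> = refl_prod (a # xs) \<circ> s b"
    by (simp only: ih refl_prod_Cons comp_assoc)
  finally show ?case .
qed simp

lemma C_Suc:
  assumes "m \<le> r"
  shows "C (Suc r) m = C r m \<circ> s (Suc r)"
proof -
  have "C (Suc r) m = refl_prod [m..<Suc r] \<circ> (s (Suc r) \<circ> refl_prod (rev [1..<m]))"
    using assms by (simp add: C_def refl_prod_append comp_assoc)
  also have "s (Suc r) \<circ> refl_prod (rev [1..<m]) = refl_prod (rev [1..<m]) \<circ> s (Suc r)"
    using assms by (intro s_comp_refl_prod_commute) auto
  finally have "C (Suc r) m = refl_prod [m..<Suc r] \<circ> refl_prod (rev [1..<m]) \<circ> s (Suc r)"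
    by (simp only: comp_assoc)
  then show ?thesis by (simp add: C_def refl_prod_append del: upt_Suc)
qed

lemma C_Suc_self: "1 \<le> r \<Longrightarrow> C (Suc r) (Suc r) = s (Suc r) \<circ> C r r"
  by (simp add: C_def)

lemma coxeter_word_Suc_cases:
  assumes "coxeter_word (Suc r) xs"
  obtains ys where "coxeter_word r ys" "refl_prod xs = s (Suc r) \<circ> refl_prod ys"
        | ys where "coxeter_word r ys" "refl_prod xs = refl_prod ys \<circ> s (Suc r)"
proof -
  have "Suc r \<in> set xs" and dist: "distinct xs"
    using assms by (simp_all add: coxeter_word_def)
  then obtain us vs where xs: "xs = us @ Suc r # vs" by (meson split_list)
  have "set (us @ vs) = set xs - {Suc r}"
    using dist xs by auto
  also have "\<dots> = {1..r}"
    using assms by (auto simp: coxeter_word_def atLeastAtMostSuc_conv)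
  finally have letters: "set (us @ vs) = {1..r}" .
  then have cw: "coxeter_word r (us @ vs)"
    using dist xs by (simp add: coxeter_word_def)
  consider "r \<notin> set us" | "r \<notin> set vs"
    using dist xs by auto
  then show ?thesis
  proof cases
    case 1
    then have comm: "s (Suc r) \<circ> refl_prod us = refl_prod us \<circ> s (Suc r)"
      using letters by (intro s_comp_refl_prod_commute) (auto simp: le_less)
    have "refl_prod xs = (refl_prod us \<circ> s (Suc r)) \<circ> refl_prod vs"
      by (simp add: xs refl_prod_append comp_assoc)
    then have "refl_prod xs = s (Suc r) \<circ> refl_prod (us @ vs)"
      by (simp only: comm[symmetric] refl_prod_append comp_assoc)
    with cw show ?thesis by (rule that(1))
  next
    case 2
    then have comm: "s (Suc r) \<circ> refl_prod vs = refl_prod vs \<circ> s (Suc r)"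
      using letters by (intro s_comp_refl_prod_commute) (auto simp: le_less)
    have "refl_prod xs = refl_prod us \<circ> (s (Suc r) \<circ> refl_prod vs)"
      by (simp add: xs refl_prod_append)
    then have "refl_prod xs = refl_prod (us @ vs) \<circ> s (Suc r)"
      by (simp only: comm refl_prod_append comp_assoc)
    with cw show ?thesis by (rule that(2))
  qed
qed

lemma coxeter_word_perm_permutes:
  "coxeter_word r xs \<Longrightarrow> word_perm xs permutes {1..Suc r}"
  by (intro word_perm_permutes) (simp add: coxeter_word_def)

lemma coxeter_highest_root_not_positive_iff:
  assumes "1 \<le> r" "coxeter_word r xs"
  shows "refl_prod xs (highest_root r) \<notin> positive_roots r \<longleftrightarrow>
         word_perm xs (Suc r) < word_perm xs 1"
proof -
  have perm: "word_perm xs permutes {1..Suc r}"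
    using assms(2) by (rule coxeter_word_perm_permutes)
  then have "word_perm xs 1 \<noteq> word_perm xs (Suc r)"
    using assms(1) by (simp add: permutes_inj inj_eq)
  moreover have "word_perm xs 1 \<in> {1..Suc r}" "word_perm xs (Suc r) \<in> {1..Suc r}"
    using permutes_in_image[OF perm] by auto
  ultimately show ?thesis
    by (auto simp: refl_prod_highest_root diff_e_in_positive_roots_iff)
qed

lemma coxeter_word_Cons_ends_reversed:
  assumes "1 \<le> r" "coxeter_word r ys"
    and "word_perm (Suc r # ys) (Suc (Suc r)) < word_perm (Suc r # ys) 1"
  shows "word_perm ys 1 = Suc r \<and> word_perm ys (Suc r) < word_perm ys 1"
proof -
  have perm: "word_perm ys permutes {1..Suc r}"
    using assms(2) by (rule coxeter_word_perm_permutes)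
  then have "word_perm ys (Suc (Suc r)) = Suc (Suc r)"
    by (simp add: permutes_not_in)
  then have "Suc r < transpose (Suc r) (Suc (Suc r)) (word_perm ys 1)"
    using assms(3) by simp
  moreover have range: "word_perm ys 1 \<in> {1..Suc r}" "word_perm ys (Suc r) \<in> {1..Suc r}"
    using permutes_in_image[OF perm] by auto
  ultimately have "word_perm ys 1 = Suc r"
    by (cases "word_perm ys 1 = Suc r") auto
  moreover have "word_perm ys (Suc r) \<noteq> word_perm ys 1"
    using perm assms(1) by (simp add: permutes_inj inj_eq)
  ultimately show ?thesis
    using range by simp
qed

lemma coxeter_word_eq_C_if_ends_reversed:
  assumes "1 \<le> r" "coxeter_word r xs" "word_perm xs (Suc r) < word_perm xs 1"
  shows "\<exists>m\<in>{1..r}. refl_prod xs = C r m"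
  using assms
proof (induction r arbitrary: xs rule: nat_induct_at_least)
  case base
  then have "distinct xs" "set xs = {1}"
    by (simp_all add: coxeter_word_def)
  then have "length xs = 1"
    using distinct_card[of xs] by simp
  then obtain x where "xs = [x]"
    by (cases xs) auto
  with \<open>set xs = {1}\<close> have "xs = [1]"
    by simp
  then show ?case by (simp add: C_def)
next
  case (Suc r)
  from Suc.prems(1) show ?case
  proof (cases rule: coxeter_word_Suc_cases)
    case (1 ys)
    then have "word_perm xs = word_perm (Suc r # ys)"
      by (intro word_perm_eq_if_refl_prod_eq) simp
    with Suc.prems(2)
    have ends: "word_perm ys 1 = Suc r \<and> word_perm ys (Suc r) < word_perm ys 1"
      by (intro coxeter_word_Cons_ends_reversed Suc.hyps 1(1)) simp
    with Suc.IH 1(1) obtain m where m: "m \<in> {1..r}" "refl_prod ys = C r m"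
      by blast
    have "e (Suc m) = refl_prod ys (e 1)"
      using C_e_1[of m r] m by simp
    also have "\<dots> = e (Suc r)"
      using ends by (simp add: refl_prod_e)
    finally have "m = r"
      by simp
    with 1(2) m Suc.hyps have "refl_prod xs = C (Suc r) (Suc r)"
      by (simp add: C_Suc_self)
    then show ?thesis by auto
  next
    case (2 ys)
    then have "word_perm xs = word_perm (ys @ [Suc r])"
      by (intro word_perm_eq_if_refl_prod_eq) (simp add: refl_prod_append)
    with Suc.prems(2) Suc.hyps have "word_perm ys (Suc r) < word_perm ys 1"
      by (simp add: word_perm_append)
    with Suc.IH 2(1) obtain m where m: "m \<in> {1..r}" "refl_prod ys = C r m"
      by blast
    with 2(2) have "refl_prod xs = C (Suc r) m"
      by (simp add: C_Suc)
    with m show ?thesis by auto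
  qed
qed

theorem lemma4:
  fixes r :: nat
  assumes "1 \<le> r"
  shows "(\<forall>m\<in>{1..r}. C r m (highest_root r) = - simple_root m) \<and>
         (\<forall>xs. coxeter_word r xs \<longrightarrow>
            (refl_prod xs (highest_root r) \<in> positive_roots r \<longleftrightarrow>
             refl_prod xs \<notin> {C r m | m. m \<in> {1..r}}))"
proof (intro conjI ballI allI impI)
  show "C r m (highest_root r) = - simple_root m" if "m \<in> {1..r}" for m
    using that by (simp add: C_highest_root)
next
  fix xs assume cox: "coxeter_word r xs"
  have "refl_prod xs (highest_root r) \<notin> positive_roots r"
    if "m \<in> {1..r}" "refl_prod xs = C r m" for m
  proof -
    have "refl_prod xs (highest_root r) = e (Suc m) - e m"
      using that by (simp add: C_highest_root simple_root_def fun_eq_iff)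
    then show ?thesis by (simp add: diff_e_in_positive_roots_iff)
  qed
  then show "refl_prod xs (highest_root r) \<in> positive_roots r \<longleftrightarrow>
             refl_prod xs \<notin> {C r m | m. m \<in> {1..r}}"
    using coxeter_highest_root_not_positive_iff[OF assms cox]
      coxeter_word_eq_C_if_ends_reversed[OF assms cox] by blast
qed

end
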